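(* Let $A,B\in\Gamma(3)$. Then $\Gamma_\infty(3)\cdot A=\Gamma_\infty(3)\cdot B$ if and only if $Inv(A)=Inv(B)$.
   Context: Let $\omega=e^{2\pi i/3}$ and $\mathfrak{o}=\mathbb{Z}[\omega]$. $\Gamma(3)=\{A\in SL_3(\mathfrak{o}) : A\equiv I_3 \pmod{3\mathfrak{o}}\}$ (congruence entrywise), and $\Gamma_\infty(3)$ is the subgroup of upper triangular unipotent matrices in $\Gamma(3)$. For $A=\begin{pmatrix} a&b&c\\ d&e&f\\ g&h&i\end{pmatrix}$, $Inv(A)=(g,\,h,\,i,\,dh-eg,\,di-fg,\,ei-fh)\in\mathfrak{o}^6$, i.e. the bottom row of $A$ followed by the bottom row of the matrix $\Lambda^2(A)=\begin{pmatrix} ae-bd & af-cd & bf-ec\\ ah-bg & ai-cg & bi-hc\\ dh-eg & di-fg & ei-fh\end{pmatrix}$. *)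

theory Defs
  imports "HOL-Analysis.Analysis"
begin

definition omega :: complex where
  "omega = exp (2 * of_real pi * \<i> / 3)"

definition Eis :: "complex set" where
  "Eis = {of_int a + of_int b * omega | a b. True}"

definition cong3 :: "complex \<Rightarrow> complex \<Rightarrow> bool" where
  "cong3 x y \<longleftrightarrow> (\<exists>z\<in>Eis. x - y = 3 * z)"

definition Gamma3 :: "(complex^3^3) set" where
  "Gamma3 = {A. (\<forall>i j. A $ i $ j \<in> Eis) \<and> det A = 1 \<and>
                (\<forall>i j. cong3 (A $ i $ j) (mat 1 $ i $ j))}"

definition Gamma_inf3 :: "(complex^3^3) set" where
  "Gamma_inf3 = {N \<in> Gamma3. N $ 1 $ 1 = 1 \<and> N $ 2 $ 2 = 1 \<and> N $ 3 $ 3 = 1 \<and>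
                   N $ 2 $ 1 = 0 \<and> N $ 3 $ 1 = 0 \<and> N $ 3 $ 2 = 0}"

definition orbit3 :: "complex^3^3 \<Rightarrow> (complex^3^3) set" where
  "orbit3 A = (\<lambda>N. N ** A) ` Gamma_inf3"

definition Inv :: "complex^3^3 \<Rightarrow> complex \<times> complex \<times> complex \<times> complex \<times> complex \<times> complex" where
  "Inv A = (let d = A$2$1; e = A$2$2; f = A$2$3; g = A$3$1; h = A$3$2; i = A$3$3
            in (g, h, i, d*h - e*g, d*i - f*g, e*i - f*h))"

end

theory Submission
  imports Defs
begin

text \<open>Left multiplication by an upper unitriangular matrix adds multiples of lower rows to
  higher ones, so it changes neither the bottom row nor the 2x2 minors of the two bottom rows.
  Conversely, if \<open>Inv A = Inv B\<close> then \<open>N = B adj(A) = B A\<^sup>-\<^sup>1\<close> lies in \<open>\<Gamma>(3)\<close>, because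
  \<open>B \<equiv> A\<close> mod 3, and \<open>N\<close> fixes the bottom rows of \<open>A\<close> and of \<open>\<Lambda>\<^sup>2(A)\<close>; as both \<open>A\<close> and
  \<open>\<Lambda>\<^sup>2(A)\<close> are invertible, this forces \<open>N\<close> to be upper unitriangular.\<close>

lemma omega_squared: "omega\<^sup>2 = -1 - omega"
proof -
  have cube: "omega ^ 3 = 1"
  proof -
    have "of_nat 3 * (2 * of_real pi * \<i> / 3) = 2 * of_real pi * \<i>" by simp
    then show ?thesis unfolding omega_def by (metis exp_of_nat_mult exp_two_pi_i)
  qed
  have "Re omega = -1/2"
    unfolding omega_def by (simp add: Re_exp cos_120)
  then have "omega \<noteq> 1" by auto
  moreover have "(omega - 1) * (omega\<^sup>2 + omega + 1) = 0"
    using cube by (simp add: algebra_simps power3_eq_cube power2_eq_square)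
  ultimately have "omega\<^sup>2 + omega + 1 = 0" by simp
  then show ?thesis by (simp add: algebra_simps eq_neg_iff_add_eq_0)
qed

lemma Eis_of_int [simp]: "of_int a \<in> Eis"
  unfolding Eis_def by (rule CollectI, rule exI[of _ a], rule exI[of _ 0]) simp

lemma Eis_0 [simp]: "0 \<in> Eis"
  using Eis_of_int[of 0] by simp

lemma Eis_1 [simp]: "1 \<in> Eis"
  using Eis_of_int[of 1] by simp

lemma Eis_add [simp]: "x \<in> Eis \<Longrightarrow> y \<in> Eis \<Longrightarrow> x + y \<in> Eis"
  unfolding Eis_def
proof clarify
  fix a b c d :: int
  show "\<exists>a' b'. of_int a + of_int b * omega + (of_int c + of_int d * omega)
                = of_int a' + of_int b' * omega \<and> True"
    by (rule exI[of _ "a + c"], rule exI[of _ "b + d"]) (simp add: algebra_simps)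
qed

lemma Eis_uminus [simp]: "x \<in> Eis \<Longrightarrow> - x \<in> Eis"
  unfolding Eis_def
proof clarify
  fix a b :: int
  show "\<exists>a' b'. - (of_int a + of_int b * omega) = of_int a' + of_int b' * omega \<and> True"
    by (rule exI[of _ "- a"], rule exI[of _ "- b"]) (simp add: algebra_simps)
qed

lemma Eis_diff [simp]: "x \<in> Eis \<Longrightarrow> y \<in> Eis \<Longrightarrow> x - y \<in> Eis"
  using Eis_add[of x "- y"] by simp

lemma Eis_mult [simp]: "x \<in> Eis \<Longrightarrow> y \<in> Eis \<Longrightarrow> x * y \<in> Eis"
  unfolding Eis_def
proof clarify
  fix a b c d :: int
  have "(of_int a + of_int b * omega) * (of_int c + of_int d * omega)
      = of_int a * of_int c + (of_int a * of_int d + of_int b * of_int c) * omega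
        + of_int b * of_int d * omega\<^sup>2"
    by (simp add: algebra_simps power2_eq_square)
  also have "\<dots> = of_int (a * c - b * d) + of_int (a * d + b * c - b * d) * omega"
    by (simp add: omega_squared algebra_simps)
  finally show "\<exists>a' b'. (of_int a + of_int b * omega) * (of_int c + of_int d * omega)
                = of_int a' + of_int b' * omega \<and> True"
    by blast
qed

lemma Eis_sum: "(\<And>x. x \<in> S \<Longrightarrow> f x \<in> Eis) \<Longrightarrow> sum f S \<in> Eis"
  by (induction S rule: infinite_finite_induct) auto

lemma cong3_iff: "cong3 x y \<longleftrightarrow> (x - y) / 3 \<in> Eis"
  unfolding cong3_def by force

lemma cong3_refl: "cong3 x x"
  by (simp add: cong3_iff)

lemma cong3_sym: "cong3 x y \<Longrightarrow> cong3 y x"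
  unfolding cong3_iff by (metis Eis_uminus minus_diff_eq minus_divide_left)

lemma cong3_add: "cong3 a b \<Longrightarrow> cong3 c d \<Longrightarrow> cong3 (a + c) (b + d)"
  unfolding cong3_iff by (metis Eis_add add_diff_add add_divide_distrib)

lemma cong3_trans: "cong3 x y \<Longrightarrow> cong3 y z \<Longrightarrow> cong3 x z"
  using Eis_add[of "(x - y) / 3" "(y - z) / 3"] by (simp add: cong3_iff flip: add_divide_distrib)

lemma cong3_mult_right: "cong3 x y \<Longrightarrow> z \<in> Eis \<Longrightarrow> cong3 (x * z) (y * z)"
  using Eis_mult[of "(x - y) / 3" z] by (simp add: cong3_iff left_diff_distrib)

lemma cong3_sum: "(\<And>x. x \<in> S \<Longrightarrow> cong3 (f x) (g x)) \<Longrightarrow> cong3 (sum f S) (sum g S)"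
  by (induction S rule: infinite_finite_induct) (auto intro: cong3_refl cong3_add)

definition Eis_matrix :: "complex^'n^'m \<Rightarrow> bool" where
  "Eis_matrix X \<longleftrightarrow> (\<forall>i j. X$i$j \<in> Eis)"

definition cong3_matrix :: "complex^'n^'m \<Rightarrow> complex^'n^'m \<Rightarrow> bool" where
  "cong3_matrix X Y \<longleftrightarrow> (\<forall>i j. cong3 (X$i$j) (Y$i$j))"

lemma Eis_matrix_mult: "Eis_matrix X \<Longrightarrow> Eis_matrix Y \<Longrightarrow> Eis_matrix (X ** Y)"
  unfolding Eis_matrix_def matrix_matrix_mult_def by (auto intro!: Eis_sum)

lemma cong3_matrix_mult_right:
  "cong3_matrix X Y \<Longrightarrow> Eis_matrix Z \<Longrightarrow> cong3_matrix (X ** Z) (Y ** Z)"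
  unfolding cong3_matrix_def Eis_matrix_def matrix_matrix_mult_def
  by (auto intro!: cong3_sum cong3_mult_right)

lemma cong3_matrix_sym: "cong3_matrix X Y \<Longrightarrow> cong3_matrix Y X"
  unfolding cong3_matrix_def by (auto intro: cong3_sym)

lemma cong3_matrix_trans: "cong3_matrix X Y \<Longrightarrow> cong3_matrix Y Z \<Longrightarrow> cong3_matrix X Z"
  unfolding cong3_matrix_def by (blast intro: cong3_trans)

lemma Gamma3_iff: "A \<in> Gamma3 \<longleftrightarrow> Eis_matrix A \<and> det A = 1 \<and> cong3_matrix A (mat 1)"
  unfolding Gamma3_def Eis_matrix_def cong3_matrix_def by auto

lemma mat_1_in_Gamma3: "mat 1 \<in> Gamma3"
  unfolding Gamma3_iff Eis_matrix_def cong3_matrix_def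
  by (simp add: det_I[unfolded mat_def] mat_def cong3_refl)

lemma Gamma3_mult:
  assumes N: "N \<in> Gamma3" and M: "M \<in> Gamma3"
  shows "N ** M \<in> Gamma3"
proof -
  have "cong3_matrix (N ** M) M"
    using N M cong3_matrix_mult_right[of N "mat 1" M] by (simp add: Gamma3_iff)
  then have "cong3_matrix (N ** M) (mat 1)"
    using M by (auto simp: Gamma3_iff intro: cong3_matrix_trans)
  with N M show ?thesis
    by (simp add: Gamma3_iff Eis_matrix_mult det_mul)
qed

definition adj3 :: "'a::comm_ring_1^3^3 \<Rightarrow> 'a^3^3" where
  "adj3 A = (let a = A$1$1; b = A$1$2; c = A$1$3; d = A$2$1; e = A$2$2; f = A$2$3;
       g = A$3$1; h = A$3$2; i = A$3$3 in
     vector [vector [e*i - f*h, c*h - b*i, b*f - c*e],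
             vector [f*g - d*i, a*i - c*g, c*d - a*f],
             vector [d*h - e*g, b*g - a*h, a*e - b*d]])"

lemma adj3_mult: "adj3 A ** A = mat (det A)"
  by (simp add: adj3_def Let_def vec_eq_iff forall_3 matrix_matrix_mult_def sum_3 det_3 mat_def
      algebra_simps)

lemma mult_adj3: "A ** adj3 A = mat (det A)"
  by (simp add: adj3_def Let_def vec_eq_iff forall_3 matrix_matrix_mult_def sum_3 det_3 mat_def
      algebra_simps)

lemma Eis_matrix_adj3: "Eis_matrix A \<Longrightarrow> Eis_matrix (adj3 A)"
  unfolding Eis_matrix_def by (simp add: adj3_def Let_def forall_3)

lemma Gamma3_mult_adj3:
  assumes A: "A \<in> Gamma3" and B: "B \<in> Gamma3"
  shows "B ** adj3 A \<in> Gamma3"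
proof -
  have adj3_A: "adj3 A ** A = mat 1" "A ** adj3 A = mat 1"
    using A by (simp_all add: Gamma3_iff adj3_mult mult_adj3)
  have "Eis_matrix (B ** adj3 A)"
    using A B by (simp add: Gamma3_iff Eis_matrix_mult Eis_matrix_adj3)
  moreover have "det (B ** adj3 A) = 1"
    using det_mul[of "B ** adj3 A" A] A B
    by (simp add: Gamma3_iff adj3_A flip: matrix_mul_assoc)
  moreover have "cong3_matrix B A"
    using A B by (meson Gamma3_iff cong3_matrix_sym cong3_matrix_trans)
  then have "cong3_matrix (B ** adj3 A) (A ** adj3 A)"
    using A by (simp add: Gamma3_iff Eis_matrix_adj3 cong3_matrix_mult_right)
  ultimately show ?thesis
    by (simp add: Gamma3_iff adj3_A)
qed

definition upper_unitriangular :: "'a::zero_neq_one^3^3 \<Rightarrow> bool" where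
  "upper_unitriangular N \<longleftrightarrow> N$1$1 = 1 \<and> N$2$2 = 1 \<and> N$3$3 = 1 \<and>
     N$2$1 = 0 \<and> N$3$1 = 0 \<and> N$3$2 = 0"

lemma Gamma_inf3_iff: "N \<in> Gamma_inf3 \<longleftrightarrow> N \<in> Gamma3 \<and> upper_unitriangular N"
  unfolding Gamma_inf3_def upper_unitriangular_def by auto

lemma upper_unitriangular_mult:
  fixes N M :: "'a::comm_ring_1^3^3"
  shows "upper_unitriangular N \<Longrightarrow> upper_unitriangular M \<Longrightarrow> upper_unitriangular (N ** M)"
  unfolding upper_unitriangular_def by (simp add: matrix_matrix_mult_def sum_3)

lemma Gamma_inf3_mult: "N \<in> Gamma_inf3 \<Longrightarrow> M \<in> Gamma_inf3 \<Longrightarrow> N ** M \<in> Gamma_inf3"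
  by (simp add: Gamma_inf3_iff Gamma3_mult upper_unitriangular_mult)

lemma mat_1_in_Gamma_inf3: "mat 1 \<in> Gamma_inf3"
  unfolding Gamma_inf3_iff using mat_1_in_Gamma3 by (simp add: upper_unitriangular_def mat_def)

lemma Inv_upper_unitriangular_mult: "upper_unitriangular N \<Longrightarrow> Inv (N ** A) = Inv A"
  unfolding upper_unitriangular_def
  by (simp add: Inv_def Let_def matrix_matrix_mult_def sum_3 algebra_simps)

lemma upper_unitriangular_if_Inv_mult_eq:
  assumes "det A \<noteq> 0" and "det N = 1" and "Inv (N ** A) = Inv A"
  shows "upper_unitriangular N"
proof -
  \<comment> \<open>With rows \<open>r\<^sub>i\<close> of \<open>A\<close>, the hypothesis says \<open>\<Sum>\<^sub>k N\<^sub>3\<^sub>k r\<^sub>k = r\<^sub>3\<close>, and then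
    \<open>N\<^sub>2\<^sub>1 (r\<^sub>1 \<wedge> r\<^sub>3) + N\<^sub>2\<^sub>2 (r\<^sub>2 \<wedge> r\<^sub>3) = r\<^sub>2 \<wedge> r\<^sub>3\<close>; both systems have invertible matrices.\<close>
  have row3: "N$3$1 = 0 \<and> N$3$2 = 0 \<and> N$3$3 = 1"
    using assms(1,3) unfolding det_3
    by (simp add: Inv_def Let_def matrix_matrix_mult_def sum_3) algebra
  have row2: "N$2$1 = 0 \<and> N$2$2 = 1"
    using assms(1,3) row3 unfolding det_3
    by (simp add: Inv_def Let_def matrix_matrix_mult_def sum_3) algebra
  have "N$1$1 = 1"
    using assms(2) row2 row3 by (simp add: det_3)
  with row2 row3 show ?thesis
    unfolding upper_unitriangular_def by simp
qed

lemma Gamma_inf3_factor_if_Inv_eq: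
  assumes A: "A \<in> Gamma3" and B: "B \<in> Gamma3" and "Inv A = Inv B"
  obtains N where "N \<in> Gamma_inf3" and "B = N ** A"
proof
  let ?N = "B ** adj3 A"
  have N_A: "?N ** A = B"
    using A by (simp add: Gamma3_iff adj3_mult flip: matrix_mul_assoc)
  have "?N \<in> Gamma3"
    using A B by (rule Gamma3_mult_adj3)
  moreover have "upper_unitriangular ?N"
    using A \<open>?N \<in> Gamma3\<close> \<open>Inv A = Inv B\<close> N_A
    by (intro upper_unitriangular_if_Inv_mult_eq[of A]) (simp_all add: Gamma3_iff)
  ultimately show "?N \<in> Gamma_inf3"
    by (simp add: Gamma_inf3_iff)
  show "B = ?N ** A"
    using N_A by simp
qed

lemma self_in_orbit3: "A \<in> orbit3 A"
  unfolding orbit3_def using mat_1_in_Gamma_inf3 by (metis image_eqI matrix_mul_lid)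

lemma orbit3_mult_subset: "N \<in> Gamma_inf3 \<Longrightarrow> orbit3 (N ** A) \<subseteq> orbit3 A"
  unfolding orbit3_def by (auto simp: matrix_mul_assoc intro: Gamma_inf3_mult)

theorem theorem2p7:
  assumes "A \<in> Gamma3" and "B \<in> Gamma3"
  shows "orbit3 A = orbit3 B \<longleftrightarrow> Inv A = Inv B"
proof
  assume "orbit3 A = orbit3 B"
  then obtain N where "N \<in> Gamma_inf3" and "B = N ** A"
    using self_in_orbit3[of B] unfolding orbit3_def by auto
  then show "Inv A = Inv B"
    by (simp add: Gamma_inf3_iff Inv_upper_unitriangular_mult)
next
  assume Inv_eq: "Inv A = Inv B"
  obtain N where "N \<in> Gamma_inf3" and "B = N ** A"
    using Gamma_inf3_factor_if_Inv_eq[OF assms Inv_eq] .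
  moreover obtain M where "M \<in> Gamma_inf3" and "A = M ** B"
    using Gamma_inf3_factor_if_Inv_eq[OF assms(2,1) Inv_eq[symmetric]] .
  ultimately show "orbit3 A = orbit3 B"
    by (metis orbit3_mult_subset subset_antisym)
qed

end
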